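(* Let $\delta t>0$ and $\sigma>0$, and let $(\tilde c_h^{n},c_h^n,\tilde\rho_h^n,\rho_h^n,\lambda_h^n,\xi_h^n,\theta_h^{n-\frac12})_{n\ge 1}$ be any solution of the Crank–Nicolson positivity-preserving scheme (Steps 1–4 in the context), started with $\lambda_h^0\equiv 0$, $\xi_h^0=0$. Then for every $n\ge 0$, $$\lambda_h^{n+1}(z)\ge 0\ \ \forall z\in\Sigma_h,\qquad \xi_h^{n+1}=-\frac{[\lambda_h^{n+1},1]}{|\Omega|}\le 0 .$$
   Context: Discrete setting: $\Sigma_h$ is a finite set of nodes in $\bar\Omega\subset\mathbb R^d$; $X_h$ is identified with the space of real grid functions on $\Sigma_h$ (nodal values), and products, $\log$, etc. act pointwise on nodal values. The discrete inner product is $[u,v]=\sum_{z\in\Sigma_h}\beta_z u(z)v(z)$ with fixed weights $\beta_z>0$ (for vector grid functions $[w,w']=\sum_z\beta_z w(z)\cdot w'(z)$), $\|u\|=[u,u]^{1/2}$, $|\Omega|:=[1,1]$. $\nabla_h$ (discrete gradient) and $\nabla_h\cdot$ (discrete divergence) satisfy summation by parts $[\nabla_h\cdot w,v]=-[w,\nabla_h v]$ and $\nabla_h 1=0$ (periodic boundary conditions); $\Delta_h=\nabla_h\cdot\nabla_h$. Parameters $\epsilon,\mu,\gamma,\chi>0$. Crank–Nicolson positivity scheme for the first Keller–Segel system ($\partial_t\rho=\gamma\Delta\rho-\chi\nabla\cdot(\rho\nabla c)$, $\epsilon\partial_t c=\mu\Delta c+\rho$): write $\tilde c_h^{n+\frac12}=\frac{\tilde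 c_h^{n+1}+c_h^n}{2}$, $\tilde\rho_h^{n+\frac12}=\frac{\tilde\rho_h^{n+1}+\rho_h^n}{2}$, $\rho_h^{n+\frac12}=\frac{\rho_h^{n+1}+\rho_h^n}{2}$. Given $\rho_h^{n-1},\rho_h^n,c_h^n,\tilde c_h^n,\lambda_h^n\in X_h$, $\xi_h^n\in\mathbb R$: Step 1: $\epsilon\frac{\tilde c_h^{n+1}-c_h^n}{\delta t}=\mu\Delta_h\tilde c_h^{n+\frac12}+\frac32\rho_h^n-\frac12\rho_h^{n-1}$. Step 2: $\frac{\tilde\rho_h^{n+1}-\rho_h^n}{\delta t}=\gamma\Delta_h\tilde\rho_h^{n+\frac12}-\chi\nabla_h\cdot(\tilde\rho_h^{n+\frac12}\nabla_h\tilde c_h^{n+\frac12})+\lambda_h^n+\xi_h^n$. Step 3: find $\rho_h^{n+1},\lambda_h^{n+1}\in X_h$, $\xi_h^{n+1}\in\mathbb R$ with $\frac{\rho_h^{n+1}-\tilde\rho_h^{n+1}}{\delta t}=\frac{\lambda_h^{n+1}+\xi_h^{n+1}-\lambda_h^n-\xi_h^n}{2}$ at every node, $\rho_h^{n+1}(z)\ge0$, $\lambda_h^{n+1}(z)\ge0$, $\lambda_h^{n+1}(z)\rho_h^{n+1}(z)=0$ for all $z\in\Sigma_h$, and $[\rho_h^{n+1},1]=[\rho_h^0,1]$. Step 4: find $c_h^{n+1}\in X_h$ and a scalar $\theta_h^{n+\frac12}$ with $\epsilon\frac{c_h^{n+1}-\tilde c_h^{n+1}}{\delta t}=\theta_h^{n+\frac12}$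 and $\frac{E_h^{n+1}-E_h^n}{\delta t}=-\big[\rho_h^{n+\frac12}|\nabla_h(\log(\rho_h^{n+\frac12}+\sigma)-\tilde c_h^{n+\frac12})|^2+|\tfrac{\tilde c_h^{n+1}-\tilde c_h^n}{\delta t}|^2,1\big]$, where $E_h^{k}=[\rho_h^{k}\log(\rho_h^{k}+\sigma)-\rho_h^{k}-\rho_h^{k}c_h^{k}+\frac12|\nabla_h c_h^{k}|^2,1]$. *)

theory Defs
  imports "HOL-Analysis.Analysis"
begin

text \<open>Grid functions on the node set S are functions 'a \<Rightarrow> real (only values on S matter);
  vector grid functions are 'a \<Rightarrow> real^'d.\<close>

definition ip :: "'a set \<Rightarrow> ('a \<Rightarrow> real) \<Rightarrow> ('a \<Rightarrow> real) \<Rightarrow> ('a \<Rightarrow> real) \<Rightarrow> real" where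
  "ip S \<beta> u v = (\<Sum>z\<in>S. \<beta> z * u z * v z)"

definition ipv :: "'a set \<Rightarrow> ('a \<Rightarrow> real) \<Rightarrow> ('a \<Rightarrow> real^'d) \<Rightarrow> ('a \<Rightarrow> real^'d) \<Rightarrow> real" where
  "ipv S \<beta> w w' = (\<Sum>z\<in>S. \<beta> z * (w z \<bullet> w' z))"

text \<open>Discrete setting: finite nonempty node set, positive weights, summation by parts,
  and the gradient of the constant 1 vanishes (periodic boundary conditions).\<close>
definition disc_setting ::
  "'a set \<Rightarrow> ('a \<Rightarrow> real) \<Rightarrow> (('a \<Rightarrow> real) \<Rightarrow> ('a \<Rightarrow> real^'d)) \<Rightarrow> (('a \<Rightarrow> real^'d) \<Rightarrow> ('a \<Rightarrow> real)) \<Rightarrow> bool" where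
  "disc_setting S \<beta> grad dv \<longleftrightarrow>
     finite S \<and> S \<noteq> {} \<and> (\<forall>z\<in>S. \<beta> z > 0) \<and>
     (\<forall>w v. ip S \<beta> (dv w) v = - ipv S \<beta> w (grad v)) \<and>
     (\<forall>z\<in>S. grad (\<lambda>_. 1) z = 0)"

definition lap :: "(('a \<Rightarrow> real) \<Rightarrow> ('a \<Rightarrow> real^'d)) \<Rightarrow> (('a \<Rightarrow> real^'d) \<Rightarrow> ('a \<Rightarrow> real)) \<Rightarrow> ('a \<Rightarrow> real) \<Rightarrow> ('a \<Rightarrow> real)" where
  "lap grad dv u = dv (grad u)"

definition half :: "('a \<Rightarrow> real) \<Rightarrow> ('a \<Rightarrow> real) \<Rightarrow> ('a \<Rightarrow> real)" where
  "half u v = (\<lambda>z. (u z + v z) / 2)"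

definition energy :: "'a set \<Rightarrow> ('a \<Rightarrow> real) \<Rightarrow> (('a \<Rightarrow> real) \<Rightarrow> ('a \<Rightarrow> real^'d)) \<Rightarrow> real \<Rightarrow>
    ('a \<Rightarrow> real) \<Rightarrow> ('a \<Rightarrow> real) \<Rightarrow> real" where
  "energy S \<beta> grad \<sigma> \<rho> c =
     (\<Sum>z\<in>S. \<beta> z * (\<rho> z * ln (\<rho> z + \<sigma>) - \<rho> z - \<rho> z * c z + (norm (grad c z))^2 / 2))"

text \<open>The Crank--Nicolson positivity-preserving scheme, Steps 1--4, for every n \<ge> 0.
  rhom1 is the datum rho^{-1}; rho n, c n, ct n (= tilde c^n), rt n (= tilde rho^n),
  lam n, xi n are the discrete unknowns at level n; theta n is theta^{n+1/2}.\<close>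
definition CN_scheme ::
  "'a set \<Rightarrow> ('a \<Rightarrow> real) \<Rightarrow> (('a \<Rightarrow> real) \<Rightarrow> ('a \<Rightarrow> real^'d)) \<Rightarrow> (('a \<Rightarrow> real^'d) \<Rightarrow> ('a \<Rightarrow> real)) \<Rightarrow>
   real \<Rightarrow> real \<Rightarrow> real \<Rightarrow> real \<Rightarrow> real \<Rightarrow> real \<Rightarrow>
   ('a \<Rightarrow> real) \<Rightarrow> (nat \<Rightarrow> 'a \<Rightarrow> real) \<Rightarrow> (nat \<Rightarrow> 'a \<Rightarrow> real) \<Rightarrow> (nat \<Rightarrow> 'a \<Rightarrow> real) \<Rightarrow>
   (nat \<Rightarrow> 'a \<Rightarrow> real) \<Rightarrow> (nat \<Rightarrow> 'a \<Rightarrow> real) \<Rightarrow> (nat \<Rightarrow> real) \<Rightarrow> (nat \<Rightarrow> real) \<Rightarrow> bool" where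
  "CN_scheme S \<beta> grad dv \<epsilon> \<mu> \<gamma> chi dt \<sigma> rhom1 rho c ct rt lam xi theta \<longleftrightarrow>
    (\<forall>n. \<forall>z\<in>S.
       \<epsilon> * (ct (Suc n) z - c n z) / dt
         = \<mu> * lap grad dv (half (ct (Suc n)) (c n)) z
           + 3/2 * rho n z - 1/2 * (if n = 0 then rhom1 z else rho (n - 1) z)) \<and>
    (\<forall>n. \<forall>z\<in>S.
       (rt (Suc n) z - rho n z) / dt
         = \<gamma> * lap grad dv (half (rt (Suc n)) (rho n)) z
           - chi * dv (\<lambda>y. half (rt (Suc n)) (rho n) y *\<^sub>R grad (half (ct (Suc n)) (c n)) y) z
           + lam n z + xi n) \<and>
    (\<forall>n. (\<forall>z\<in>S.
          (rho (Suc n) z - rt (Suc n) z) / dt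
            = (lam (Suc n) z + xi (Suc n) - lam n z - xi n) / 2
          \<and> rho (Suc n) z \<ge> 0 \<and> lam (Suc n) z \<ge> 0 \<and> lam (Suc n) z * rho (Suc n) z = 0)
        \<and> ip S \<beta> (rho (Suc n)) (\<lambda>_. 1) = ip S \<beta> (rho 0) (\<lambda>_. 1)) \<and>
    (\<forall>n. (\<forall>z\<in>S. \<epsilon> * (c (Suc n) z - ct (Suc n) z) / dt = theta n) \<and>
        (energy S \<beta> grad \<sigma> (rho (Suc n)) (c (Suc n)) - energy S \<beta> grad \<sigma> (rho n) (c n)) / dt
          = - (\<Sum>z\<in>S. \<beta> z *
                 (half (rho (Suc n)) (rho n) z
                    * (norm (grad (\<lambda>y. ln (half (rho (Suc n)) (rho n) y + \<sigma>)
                                       - half (ct (Suc n)) (ct n) y) z))^2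
                  + ((ct (Suc n) z - ct n z) / dt)^2)))"

end

theory Submission
  imports Defs
begin

text \<open>Summing Steps 2 and 3 of the scheme against the weights, the diffusion and chemotaxis
  terms drop out (they are discrete divergences, and the gradient of a constant vanishes), so
  mass conservation forces the total multiplier mass \<open>[\<lambda>\<^sup>n + \<xi>\<^sup>n, 1]\<close> to change sign at
  every step. Starting from \<open>\<lambda>\<^sup>0 = 0\<close>, \<open>\<xi>\<^sup>0 = 0\<close>, it stays zero, i.e.
  \<open>\<xi>\<^sup>n\<^sup>+\<^sup>1 |\<Omega>| = -[\<lambda>\<^sup>n\<^sup>+\<^sup>1, 1]\<close>, and \<open>\<lambda>\<^sup>n\<^sup>+\<^sup>1 \<ge> 0\<close> is part of Step 3.\<close>

lemma disc_setting_volume_pos: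
  assumes "disc_setting S \<beta> grad dv"
  shows "ip S \<beta> (\<lambda>_. 1) (\<lambda>_. 1) > 0"
  using assms unfolding disc_setting_def ip_def by (simp add: sum_pos)

lemma disc_setting_ip_div_one:
  assumes "disc_setting S \<beta> grad dv"
  shows "ip S \<beta> (dv w) (\<lambda>_. 1) = 0"
proof -
  have "ipv S \<beta> w (grad (\<lambda>_. 1)) = 0"
    using assms unfolding disc_setting_def ipv_def by simp
  then show ?thesis
    using assms unfolding disc_setting_def by simp
qed

lemma ip_one_nonneg:
  assumes "\<forall>z\<in>S. \<beta> z > 0" "\<forall>z\<in>S. u z \<ge> 0"
  shows "ip S \<beta> u (\<lambda>_. 1) \<ge> 0"
  using assms unfolding ip_def by (simp add: sum_nonneg less_imp_le)

lemma multiplier_mass_alternates: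
  fixes r r' rt l l' u :: "'a \<Rightarrow> real" and w :: "'a \<Rightarrow> real^'d"
  assumes div_mass: "\<And>w. ip S \<beta> (dv w) (\<lambda>_. 1) = 0"
    and "dt > 0"
    and predictor: "\<forall>z\<in>S. (rt z - r z) / dt = \<gamma> * lap grad dv u z - chi * dv w z + l z + x"
    and corrector: "\<forall>z\<in>S. (r' z - rt z) / dt = (l' z + x' - l z - x) / 2"
    and mass: "ip S \<beta> r' (\<lambda>_. 1) = ip S \<beta> r (\<lambda>_. 1)"
  shows "ip S \<beta> l' (\<lambda>_. 1) + x' * ip S \<beta> (\<lambda>_. 1) (\<lambda>_. 1)
           = - (ip S \<beta> l (\<lambda>_. 1) + x * ip S \<beta> (\<lambda>_. 1) (\<lambda>_. 1))"
proof -
  define D1 where "D1 = lap grad dv u"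
  define D2 where "D2 = dv w"
  have pointwise: "\<beta> z * r' z - \<beta> z * r z =
      (dt * \<gamma>) * (\<beta> z * D1 z) - (dt * chi) * (\<beta> z * D2 z)
      + (dt / 2) * (\<beta> z * l z) + (dt / 2 * x) * \<beta> z
      + (dt / 2) * (\<beta> z * l' z) + (dt / 2 * x') * \<beta> z" if "z \<in> S" for z
  proof -
    have "rt z - r z = dt * (\<gamma> * D1 z - chi * D2 z + l z + x)"
      using predictor that \<open>dt > 0\<close> unfolding D1_def D2_def by (simp add: field_simps)
    moreover have "r' z - rt z = dt * ((l' z + x' - l z - x) / 2)"
      using corrector that \<open>dt > 0\<close> by (simp add: field_simps)
    ultimately have "r' z - r z = dt * (\<gamma> * D1 z - chi * D2 z + (l z + x + l' z + x') / 2)"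
      by (simp add: field_simps)
    then have "\<beta> z * (r' z - r z)
        = \<beta> z * (dt * (\<gamma> * D1 z - chi * D2 z + (l z + x + l' z + x') / 2))"
      by simp
    then show ?thesis by (simp add: algebra_simps add_divide_distrib)
  qed
  have "0 = (\<Sum>z\<in>S. \<beta> z * r' z - \<beta> z * r z)"
    using mass unfolding ip_def by (simp add: sum_subtractf)
  also have "\<dots> = (\<Sum>z\<in>S. (dt * \<gamma>) * (\<beta> z * D1 z) - (dt * chi) * (\<beta> z * D2 z)
      + (dt / 2) * (\<beta> z * l z) + (dt / 2 * x) * \<beta> z
      + (dt / 2) * (\<beta> z * l' z) + (dt / 2 * x') * \<beta> z)"
    using pointwise by (rule sum.cong[OF refl])
  also have "\<dots> = (dt * \<gamma>) * (\<Sum>z\<in>S. \<beta> z * D1 z) - (dt * chi) * (\<Sum>z\<in>S. \<beta> z * D2 z)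
      + (dt / 2) * (\<Sum>z\<in>S. \<beta> z * l z) + (dt / 2 * x) * (\<Sum>z\<in>S. \<beta> z)
      + (dt / 2) * (\<Sum>z\<in>S. \<beta> z * l' z) + (dt / 2 * x') * (\<Sum>z\<in>S. \<beta> z)"
    by (simp only: sum.distrib sum_subtractf sum_distrib_left)
  also have "\<dots> = dt / 2 * ((ip S \<beta> l (\<lambda>_. 1) + x * ip S \<beta> (\<lambda>_. 1) (\<lambda>_. 1))
      + (ip S \<beta> l' (\<lambda>_. 1) + x' * ip S \<beta> (\<lambda>_. 1) (\<lambda>_. 1)))"
    using div_mass[of w] div_mass[of "grad u"]
    unfolding D1_def D2_def lap_def ip_def by (simp add: algebra_simps)
  finally show ?thesis using \<open>dt > 0\<close> by simp
qed

lemma CN_scheme_multiplier_mass_zero: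
  assumes "disc_setting S \<beta> grad dv" and "dt > 0"
    and scheme: "CN_scheme S \<beta> grad dv \<epsilon> \<mu> \<gamma> chi dt \<sigma> rhom1 rho c ct rt lam xi theta"
    and "\<forall>z\<in>S. lam 0 z = 0" and "xi 0 = 0"
  shows "ip S \<beta> (lam n) (\<lambda>_. 1) + xi n * ip S \<beta> (\<lambda>_. 1) (\<lambda>_. 1) = 0"
proof (induction n)
  case 0
  then show ?case using assms(4,5) unfolding ip_def by simp
next
  case (Suc n)
  have predictor: "\<forall>z\<in>S. (rt (Suc n) z - rho n z) / dt
      = \<gamma> * lap grad dv (half (rt (Suc n)) (rho n)) z
        - chi * dv (\<lambda>y. half (rt (Suc n)) (rho n) y *\<^sub>R grad (half (ct (Suc n)) (c n)) y) z
        + lam n z + xi n"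
    and corrector: "\<forall>z\<in>S. (rho (Suc n) z - rt (Suc n) z) / dt
      = (lam (Suc n) z + xi (Suc n) - lam n z - xi n) / 2"
    using scheme unfolding CN_scheme_def by blast+
  have mass_step: "ip S \<beta> (rho (Suc n)) (\<lambda>_. 1) = ip S \<beta> (rho n) (\<lambda>_. 1)"
    using scheme unfolding CN_scheme_def by (cases n) simp_all
  have "ip S \<beta> (lam (Suc n)) (\<lambda>_. 1) + xi (Suc n) * ip S \<beta> (\<lambda>_. 1) (\<lambda>_. 1)
      = - (ip S \<beta> (lam n) (\<lambda>_. 1) + xi n * ip S \<beta> (\<lambda>_. 1) (\<lambda>_. 1))"
    by (rule multiplier_mass_alternates[OF disc_setting_ip_div_one[OF assms(1)] \<open>dt > 0\<close>
          predictor corrector mass_step])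
  then show ?case using Suc.IH by simp
qed

theorem mainTheorem1:
  fixes S :: "'a set" and \<beta> :: "'a \<Rightarrow> real"
    and grad :: "('a \<Rightarrow> real) \<Rightarrow> ('a \<Rightarrow> real^'d)" and dv :: "('a \<Rightarrow> real^'d) \<Rightarrow> ('a \<Rightarrow> real)"
    and \<epsilon> \<mu> \<gamma> chi dt \<sigma> :: real
    and rhom1 :: "'a \<Rightarrow> real"
    and rho c ct rt lam :: "nat \<Rightarrow> 'a \<Rightarrow> real" and xi theta :: "nat \<Rightarrow> real"
  assumes "disc_setting S \<beta> grad dv"
    and "\<epsilon> > 0" "\<mu> > 0" "\<gamma> > 0" "chi > 0" "dt > 0" "\<sigma> > 0"
    and "CN_scheme S \<beta> grad dv \<epsilon> \<mu> \<gamma> chi dt \<sigma> rhom1 rho c ct rt lam xi theta"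
    and "\<forall>z\<in>S. lam 0 z = 0" and "xi 0 = 0"
  shows "\<forall>n. (\<forall>z\<in>S. lam (Suc n) z \<ge> 0)
           \<and> xi (Suc n) = - ip S \<beta> (lam (Suc n)) (\<lambda>_. 1) / ip S \<beta> (\<lambda>_. 1) (\<lambda>_. 1)
           \<and> xi (Suc n) \<le> 0"
proof -
  have lam_nonneg: "\<forall>z\<in>S. lam (Suc n) z \<ge> 0" for n
    using assms(8) unfolding CN_scheme_def by blast
  have "\<forall>z\<in>S. \<beta> z > 0" using assms(1) unfolding disc_setting_def by simp
  then have "ip S \<beta> (lam (Suc n)) (\<lambda>_. 1) \<ge> 0" for n
    using lam_nonneg by (rule ip_one_nonneg)
  moreover have "xi n = - ip S \<beta> (lam n) (\<lambda>_. 1) / ip S \<beta> (\<lambda>_. 1) (\<lambda>_. 1)" for n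
    using CN_scheme_multiplier_mass_zero[OF assms(1,6,8-10), of n] disc_setting_volume_pos[OF assms(1)]
    by (simp add: field_simps)
  ultimately show ?thesis
    using lam_nonneg disc_setting_volume_pos[OF assms(1)] by simp
qed

end
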